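(* Let $k$ be a difference field of characteristic $0$ and $R=k\{y_1,\ldots,y_n\}$ the difference polynomial ring over $k$. Let $S\subseteq \mathbb{N}[x]^n$ and let $I=\langle \mathbf{y}^{\mathbf{u}}:\mathbf{u}\in S\rangle$ be the well-mixed closure of the set of monomials $\{\mathbf{y}^{\mathbf{u}}:\mathbf{u}\in S\}$. Then $I$ is generated by a finite set of monomials as a well-mixed $\sigma$-ideal, i.e. there is a finite set $F$ of monomials of $R$ with $I=\langle F\rangle$.
   Context: A difference field (σ-field) is a field $k$ with a ring endomorphism $\sigma:k\to k$. The difference polynomial ring $R=k\{y_1,\ldots,y_n\}$ is the polynomial ring over $k$ in the infinitely many variables $\sigma^j(y_i)$ ($1\le i\le n$, $j\ge 0$), with $\sigma$ extended by $\sigma(\sigma^j(y_i))=\sigma^{j+1}(y_i)$. Symbolic exponents: for $p=\sum_{i=0}^s c_ix^i\in\mathbb{N}[x]$ and $a\in R$, $a^p=\prod_{i=0}^s(\sigma^i(a))^{c_i}$. For $\mathbf{u}=(u_1,\ldots,u_n)\in\mathbb{N}[x]^n$, the monomial $\mathbf{y}^{\mathbf{u}}$ is $y_1^{u_1}\cdots y_n^{u_n}$. A $\sigma$-ideal is an ideal $I$ with $\sigma(I)\subseteq I$; it is well-mixed if $ab\in I$ implies $a\sigma(b)\in I$ for all $a,b\in R$. For $F\subseteq R$, $\langle F\rangle$ denotes the smallest well-mixed $\sigma$-ideal containing $F$. *)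

theory Defs
  imports "HOL-Library.Poly_Mapping" "HOL-Computational_Algebra.Polynomial"
begin

text \<open>The difference polynomial ring k{y_i : i in 'n} is modelled as the polynomial
ring over k in the variables sigma^j(y_i), indexed by pairs (i,j) :: 'n \<times> nat.\<close>

type_synonym ('n, 'k) dpoly = "(('n \<times> nat) \<Rightarrow>\<^sub>0 nat) \<Rightarrow>\<^sub>0 'k"

definition ring_endo :: "('k::field \<Rightarrow> 'k) \<Rightarrow> bool" where
  "ring_endo \<sigma> \<longleftrightarrow> (\<forall>a b. \<sigma> (a + b) = \<sigma> a + \<sigma> b) \<and> (\<forall>a b. \<sigma> (a * b) = \<sigma> a * \<sigma> b) \<and> \<sigma> 1 = 1"

definition shift_mon :: "(('n \<times> nat) \<Rightarrow>\<^sub>0 nat) \<Rightarrow> (('n \<times> nat) \<Rightarrow>\<^sub>0 nat)" where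
  "shift_mon m = (\<Sum>v\<in>Poly_Mapping.keys m. Poly_Mapping.single (fst v, Suc (snd v)) (Poly_Mapping.lookup m v))"

definition sigmaR :: "('k::field \<Rightarrow> 'k) \<Rightarrow> ('n, 'k) dpoly \<Rightarrow> ('n, 'k) dpoly" where
  "sigmaR \<sigma> p = (\<Sum>m\<in>Poly_Mapping.keys p. Poly_Mapping.single (shift_mon m) (\<sigma> (Poly_Mapping.lookup p m)))"

definition yvar :: "'n \<Rightarrow> ('n, 'k::field) dpoly" where
  "yvar i = Poly_Mapping.single (Poly_Mapping.single (i, 0) 1) 1"

definition sym_pow :: "('k::field \<Rightarrow> 'k) \<Rightarrow> ('n, 'k) dpoly \<Rightarrow> nat poly \<Rightarrow> ('n, 'k) dpoly" where
  "sym_pow \<sigma> a p = (\<Prod>i\<le>degree p. ((sigmaR \<sigma> ^^ i) a) ^ coeff p i)"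

definition ymon :: "('k::field \<Rightarrow> 'k) \<Rightarrow> ('n::finite \<Rightarrow> nat poly) \<Rightarrow> ('n, 'k) dpoly" where
  "ymon \<sigma> u = (\<Prod>i\<in>UNIV. sym_pow \<sigma> (yvar i) (u i))"

definition is_monomial :: "('k::field \<Rightarrow> 'k) \<Rightarrow> ('n::finite, 'k) dpoly \<Rightarrow> bool" where
  "is_monomial \<sigma> a \<longleftrightarrow> (\<exists>u. a = ymon \<sigma> u)"

definition is_ideal :: "('a::comm_ring_1) set \<Rightarrow> bool" where
  "is_ideal I \<longleftrightarrow> 0 \<in> I \<and> (\<forall>a\<in>I. \<forall>b\<in>I. a + b \<in> I) \<and> (\<forall>a\<in>I. \<forall>r. r * a \<in> I)"

definition wm_sigma_ideal :: "('k::field \<Rightarrow> 'k) \<Rightarrow> ('n, 'k) dpoly set \<Rightarrow> bool" where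
  "wm_sigma_ideal \<sigma> I \<longleftrightarrow> is_ideal I \<and> (\<forall>a\<in>I. sigmaR \<sigma> a \<in> I)
     \<and> (\<forall>a b. a * b \<in> I \<longrightarrow> a * sigmaR \<sigma> b \<in> I)"

definition wm_closure :: "('k::field \<Rightarrow> 'k) \<Rightarrow> ('n, 'k) dpoly set \<Rightarrow> ('n, 'k) dpoly set" where
  "wm_closure \<sigma> F = \<Inter> {I. wm_sigma_ideal \<sigma> I \<and> F \<subseteq> I}"

end

theory Submission
  imports Defs "HOL-Library.Ramsey"
begin

text \<open>
  Call \<open>u \<preceq> w\<close> if every tail sum \<open>\<Sum>\<^sub>i\<^sub>\<ge>\<^sub>j c\<^sub>i\<close> of each exponent \<open>u\<^sub>v\<close> is bounded by the
  corresponding tail sum of \<open>w\<^sub>v\<close>. Then \<open>w\<close> arises from \<open>u\<close> by repeatedly adding a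
  monomial \<open>x\<^sup>k\<close> to one exponent or replacing one \<open>x\<^sup>k\<close> by \<open>x\<^sup>k\<^sup>+\<^sup>1\<close>; the first operation
  multiplies \<open>\<^bold>y\<^sup>u\<close> by \<open>\<sigma>\<^sup>k(y\<^sub>v)\<close>, the second is exactly the well-mixed rule \<open>ab \<in> I \<Longrightarrow> a\<sigma>(b) \<in> I\<close>.
  Hence \<open>\<^bold>y\<^sup>u \<in> I\<close> implies \<open>\<^bold>y\<^sup>w \<in> I\<close> for every well-mixed \<open>\<sigma>\<close>-ideal \<open>I\<close>. The order \<open>\<preceq>\<close> is a
  well-quasi-order, so the minimal elements of \<open>S\<close> are covered by a finite subset \<open>B\<close>,
  and the monomials \<open>\<^bold>y\<^sup>u\<close>, \<open>u \<in> B\<close>, generate the same well-mixed \<open>\<sigma>\<close>-ideal.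
\<close>

section \<open>Almost-full relations\<close>

definition almost_full_on :: "'a set \<Rightarrow> ('a \<Rightarrow> 'a \<Rightarrow> bool) \<Rightarrow> bool" where
  "almost_full_on A R \<longleftrightarrow> (\<forall>f :: nat \<Rightarrow> 'a. (\<forall>i. f i \<in> A) \<longrightarrow> (\<exists>i j. i < j \<and> R (f i) (f j)))"

lemma almost_full_onD:
  fixes f :: "nat \<Rightarrow> 'a"
  assumes "almost_full_on A R" "\<And>i. f i \<in> A"
  shows "\<exists>i j. i < j \<and> R (f i) (f j)"
  using assms unfolding almost_full_on_def by blast

lemma almost_full_on_mono:
  assumes "almost_full_on A R" "\<And>x y. x \<in> A \<Longrightarrow> y \<in> A \<Longrightarrow> R x y \<Longrightarrow> Q x y"
  shows "almost_full_on A Q"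
  using assms unfolding almost_full_on_def by blast

lemma almost_full_on_map:
  assumes "almost_full_on UNIV R"
  shows "almost_full_on A (\<lambda>x y. R (g x) (g y))"
  unfolding almost_full_on_def
proof (intro allI impI)
  fix f :: "nat \<Rightarrow> 'b"
  show "\<exists>i j. i < j \<and> R (g (f i)) (g (f j))"
    using almost_full_onD[OF assms, of "\<lambda>i. g (f i)"] by blast
qed

lemma almost_full_on_nat_le: "almost_full_on UNIV ((\<le>) :: nat \<Rightarrow> nat \<Rightarrow> bool)"
  unfolding almost_full_on_def
proof (intro allI impI)
  fix f :: "nat \<Rightarrow> nat"
  obtain i where "\<forall>j. f i \<le> f j"
    using ex_has_least_nat[of "\<lambda>_. True" f] by blast
  then show "\<exists>i j. i < j \<and> f i \<le> f j" by (metis lessI)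
qed

lemma almost_full_on_chain_subseq:
  fixes f :: "nat \<Rightarrow> 'a"
  assumes R: "almost_full_on A R" and f: "\<And>i. f i \<in> A"
  shows "\<exists>h :: nat \<Rightarrow> nat. strict_mono h \<and> (\<forall>i j. i < j \<longrightarrow> R (f (h i)) (f (h j)))"
proof -
  define c where "c X = (if R (f (Min X)) (f (Max X)) then 1 else 0 :: nat)" for X :: "nat set"
  have "\<exists>Y t. Y \<subseteq> UNIV \<and> infinite Y \<and> t < 2 \<and> (\<forall>x\<in>Y. \<forall>y\<in>Y. x \<noteq> y \<longrightarrow> c {x, y} = t)"
    by (rule Ramsey2) (auto simp: c_def)
  then obtain Y t where Y: "infinite Y" and hom: "\<forall>x\<in>Y. \<forall>y\<in>Y. x \<noteq> y \<longrightarrow> c {x, y} = t"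
    by blast
  define h where "h = enumerate Y"
  have h: "strict_mono h" unfolding h_def using Y by (rule strict_mono_enumerate)
  have hom_h: "c {h i, h j} = t" if "i < j" for i j
    using hom enumerate_in_set[OF Y] strict_monoD[OF h that] unfolding h_def by auto
  have c_h: "c {h i, h j} = (if R (f (h i)) (f (h j)) then 1 else 0)" if "i < j" for i j
    using strict_monoD[OF h that] by (simp add: c_def)
  have colour: "R (f (h i)) (f (h j)) \<longleftrightarrow> t = 1" if "i < j" for i j
    using hom_h[OF that] c_h[OF that] by (simp split: if_splits)
  obtain i j where "i < j" "R (f (h i)) (f (h j))"
    using almost_full_onD[OF R, of "\<lambda>i. f (h i)"] f by blast
  with colour have "t = 1" by blast
  with colour h show ?thesis by blast
qed

lemma almost_full_on_conj:
  assumes R: "almost_full_on A R" and Q: "almost_full_on A Q"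
  shows "almost_full_on A (\<lambda>x y. R x y \<and> Q x y)"
  unfolding almost_full_on_def
proof (intro allI impI)
  fix f :: "nat \<Rightarrow> 'a" assume f: "\<forall>i. f i \<in> A"
  obtain h :: "nat \<Rightarrow> nat" where h: "strict_mono h" and chain: "\<forall>i j. i < j \<longrightarrow> R (f (h i)) (f (h j))"
    using almost_full_on_chain_subseq[OF R] f by blast
  obtain i j where ij: "i < j" and "Q (f (h i)) (f (h j))"
    using almost_full_onD[OF Q, of "\<lambda>i. f (h i)"] f by blast
  with chain strict_monoD[OF h ij]
  show "\<exists>i j. i < j \<and> R (f i) (f j) \<and> Q (f i) (f j)" by blast
qed

lemma almost_full_on_Ball:
  assumes "finite C" "\<And>c. c \<in> C \<Longrightarrow> almost_full_on A (P c)"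
  shows "almost_full_on A (\<lambda>x y. \<forall>c\<in>C. P c x y)"
  using assms
proof (induction C rule: finite_induct)
  case empty
  then show ?case unfolding almost_full_on_def by auto
next
  case (insert c C)
  then have "almost_full_on A (\<lambda>x y. P c x y \<and> (\<forall>c\<in>C. P c x y))"
    by (intro almost_full_on_conj) auto
  then show ?case by (rule almost_full_on_mono) auto
qed

lemma almost_full_on_if_residuals:
  assumes "\<And>a. a \<in> A \<Longrightarrow> almost_full_on {b\<in>A. \<not> R a b} R"
  shows "almost_full_on A R"
  unfolding almost_full_on_def
proof (intro allI impI)
  fix f :: "nat \<Rightarrow> 'a" assume f: "\<forall>i. f i \<in> A"
  show "\<exists>i j. i < j \<and> R (f i) (f j)"
  proof (cases "\<exists>j>0. R (f 0) (f j)")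
    case False
    then have "\<forall>i. f (Suc i) \<in> {b\<in>A. \<not> R (f 0) b}" using f by auto
    then obtain i j where "i < j" "R (f (Suc i)) (f (Suc j))"
      using almost_full_onD[OF assms[of "f 0"], of "\<lambda>i. f (Suc i)"] f by blast
    then show ?thesis using Suc_mono by blast
  qed blast
qed

lemma almost_full_on_finite_basis:
  assumes R: "almost_full_on A R" and "S \<subseteq> A"
  obtains B where "finite B" "B \<subseteq> S" "\<forall>s\<in>S. \<exists>b\<in>B. R b s"
proof -
  have "\<exists>B. finite B \<and> B \<subseteq> S \<and> (\<forall>s\<in>S. \<exists>b\<in>B. R b s)"
  proof (rule ccontr)
    assume no_basis: "\<not> ?thesis"
    have escape: "\<exists>s. s \<in> S \<and> (\<forall>b\<in>B. \<not> R b s)" if "finite B" "B \<subseteq> S" for B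
    proof (rule ccontr)
      assume "\<nexists>s. s \<in> S \<and> (\<forall>b\<in>B. \<not> R b s)"
      then have "\<forall>s\<in>S. \<exists>b\<in>B. R b s" by blast
      with that no_basis show False by blast
    qed
    define next_elem where "next_elem B = (SOME s. s \<in> S \<and> (\<forall>b\<in>B. \<not> R b s))" for B
    define Bs where "Bs n = ((\<lambda>B. insert (next_elem B) B) ^^ n) {}" for n
    define f where "f n = next_elem (Bs n)" for n
    have Bs: "Bs n = f ` {..<n} \<and> Bs n \<subseteq> S \<and> f n \<in> S \<and> (\<forall>b\<in>Bs n. \<not> R b (f n))" for n
    proof (induction n)
      case 0
      have "f 0 \<in> S \<and> (\<forall>b\<in>{}. \<not> R b (f 0))"
        unfolding f_def next_elem_def Bs_def funpow_0 by (rule someI_ex, rule escape) simp_all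
      then show ?case by (simp add: Bs_def)
    next
      case (Suc n)
      have Bs_Suc: "Bs (Suc n) = insert (f n) (Bs n)" by (simp add: Bs_def f_def)
      from Suc.IH have IH: "Bs n = f ` {..<n}" "Bs n \<subseteq> S" "f n \<in> S" by blast+
      have image: "Bs (Suc n) = f ` {..<Suc n}" unfolding Bs_Suc IH(1) by (simp add: lessThan_Suc)
      have subset: "Bs (Suc n) \<subseteq> S" unfolding Bs_Suc using IH(2,3) by blast
      have "f (Suc n) \<in> S \<and> (\<forall>b\<in>Bs (Suc n). \<not> R b (f (Suc n)))"
        unfolding f_def next_elem_def by (rule someI_ex, rule escape) (simp add: image, fact subset)
      with image subset show ?case by blast
    qed
    have "\<forall>i. f i \<in> A" using Bs \<open>S \<subseteq> A\<close> by blast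
    then obtain i j where "i < j" "R (f i) (f j)"
      using R unfolding almost_full_on_def by blast
    with Bs[of j] show False by blast
  qed
  with that show thesis by blast
qed

section \<open>The tail order on \<open>\<nat>[x]\<close>\<close>

definition tail_sum :: "nat poly \<Rightarrow> nat \<Rightarrow> nat" where
  "tail_sum p j = (\<Sum>i\<in>{j..degree p}. coeff p i)"

definition tail_le :: "nat poly \<Rightarrow> nat poly \<Rightarrow> bool" where
  "tail_le p q \<longleftrightarrow> (\<forall>j. tail_sum p j \<le> tail_sum q j)"

lemma tail_sum_eq_sum_upto:
  assumes "degree p \<le> N"
  shows "tail_sum p j = (\<Sum>i\<in>{j..N}. coeff p i)"
  unfolding tail_sum_def
  by (rule sum.mono_neutral_left) (use assms in \<open>auto intro: coeff_eq_0\<close>)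

lemma tail_sum_beyond_degree: "degree p < j \<Longrightarrow> tail_sum p j = 0"
  unfolding tail_sum_def by simp

lemma tail_sum_antimono: "j \<le> k \<Longrightarrow> tail_sum p k \<le> tail_sum p j"
  unfolding tail_sum_def by (rule sum_mono2) auto

lemma tail_sum_Suc: "tail_sum p j = coeff p j + tail_sum p (Suc j)"
proof -
  define N where "N = max (degree p) j"
  have "tail_sum p j = (\<Sum>i\<in>{j..N}. coeff p i)"
    by (rule tail_sum_eq_sum_upto) (simp add: N_def)
  also have "\<dots> = coeff p j + (\<Sum>i\<in>{Suc j..N}. coeff p i)"
    by (rule sum.atLeast_Suc_atMost) (simp add: N_def)
  also have "(\<Sum>i\<in>{Suc j..N}. coeff p i) = tail_sum p (Suc j)"
    by (rule tail_sum_eq_sum_upto[symmetric]) (simp add: N_def)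
  finally show ?thesis .
qed

lemma tail_sum_add_monom:
  "tail_sum (p + monom 1 k) j = tail_sum p j + (if j \<le> k then 1 else 0)"
proof -
  define N where "N = max (degree p) k"
  have N: "degree (p + monom 1 k) \<le> N"
    by (rule degree_add_le) (auto simp: N_def intro: order.trans[OF degree_monom_le])
  have "tail_sum (p + monom 1 k) j = (\<Sum>i\<in>{j..N}. coeff p i + (if k = i then 1 else 0))"
    unfolding tail_sum_eq_sum_upto[OF N] by (rule sum.cong) (auto simp: coeff_monom)
  also have "\<dots> = tail_sum p j + (if j \<le> k then 1 else 0)"
    by (simp add: sum.distrib tail_sum_eq_sum_upto[of p N] N_def)
  finally show ?thesis .
qed

lemma tail_sum_eq_imp_eq: "(\<And>j. tail_sum p j = tail_sum q j) \<Longrightarrow> p = q"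
  by (rule poly_eqI) (metis tail_sum_Suc add_right_cancel)

definition shift_closed :: "(nat poly \<Rightarrow> bool) \<Rightarrow> bool" where
  "shift_closed G \<longleftrightarrow> (\<forall>p k. G p \<longrightarrow> G (p + monom 1 k)) \<and>
     (\<forall>p k. G (p + monom 1 k) \<longrightarrow> G (p + monom 1 (Suc k)))"

text \<open>
  For \<open>k > 0\<close> the hypothesis says that \<open>x\<^sup>k\<^sup>-\<^sup>1\<close> occurs in \<open>p\<close>, so it can be shifted to \<open>x\<^sup>k\<close>.
\<close>

lemma shift_closed_raise_tail_sum:
  assumes G: "shift_closed G" "G p" and k: "k = 0 \<or> tail_sum p k < tail_sum p (k - 1)"
  obtains p' where "G p'" "\<And>i. tail_sum p' i = tail_sum p i + (if i = k then 1 else 0)"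
proof (cases k)
  case 0
  show thesis
  proof (rule that[of "p + monom 1 0"])
    show "G (p + monom 1 0)" using G unfolding shift_closed_def by blast
    show "tail_sum (p + monom 1 0) i = tail_sum p i + (if i = k then 1 else 0)" for i
      unfolding tail_sum_add_monom using 0 by simp
  qed
next
  case (Suc k')
  with k tail_sum_Suc[of p k'] have "coeff p k' > 0" by simp
  define r where "r = p - monom 1 k'"
  have p: "p = r + monom 1 k'"
    by (rule poly_eqI) (use \<open>coeff p k' > 0\<close> in \<open>auto simp: r_def coeff_monom\<close>)
  show thesis
  proof (rule that[of "r + monom 1 (Suc k')"])
    show "G (r + monom 1 (Suc k'))" using G p unfolding shift_closed_def by auto
    show "tail_sum (r + monom 1 (Suc k')) i = tail_sum p i + (if i = k then 1 else 0)" for i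
      unfolding p tail_sum_add_monom using Suc by auto
  qed
qed

lemma shift_closed_upward:
  assumes G: "shift_closed G" and "tail_le p q" "G p"
  shows "G q"
  using assms(2,3)
proof (induction "\<Sum>j\<le>degree q. tail_sum q j - tail_sum p j" arbitrary: p rule: less_induct)
  case (less p)
  show ?case
  proof (cases "\<exists>j. tail_sum p j < tail_sum q j")
    case False
    then have "p = q"
      using less.prems(1) unfolding tail_le_def by (meson antisym not_less tail_sum_eq_imp_eq)
    with less.prems show ?thesis by simp
  next
    case True
    define k where "k = (LEAST j. tail_sum p j < tail_sum q j)"
    have k: "tail_sum p k < tail_sum q k"
      unfolding k_def using True by (rule LeastI_ex)
    have k_deg: "k \<le> degree q"
      using k tail_sum_beyond_degree[of q k] by (cases "k \<le> degree q") auto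
    have "k = 0 \<or> tail_sum p k < tail_sum p (k - 1)"
    proof (cases k)
      case (Suc k')
      have "tail_sum q k' \<le> tail_sum p k'"
        using not_less_Least[of k' "\<lambda>j. tail_sum p j < tail_sum q j"] Suc by (simp add: k_def)
      with k tail_sum_antimono[of k' k q] Suc show ?thesis by simp
    qed simp
    then obtain p' where "G p'"
      and p': "\<And>i. tail_sum p' i = tail_sum p i + (if i = k then 1 else 0)"
      using shift_closed_raise_tail_sum[OF G less.prems(2)] by blast
    have "tail_le p' q" using less.prems(1) k unfolding tail_le_def p' by auto
    moreover have "(\<Sum>j\<le>degree q. tail_sum q j - tail_sum p' j)
        < (\<Sum>j\<le>degree q. tail_sum q j - tail_sum p j)"
      by (rule sum_strict_mono_ex1) (use k k_deg in \<open>auto simp: p'\<close>)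
    ultimately show ?thesis using less.hyps \<open>G p'\<close> by blast
  qed
qed

text \<open>
  Beyond position \<open>d\<close>, the tail sums of a polynomial with \<open>tail_sum q d < M\<close> are
  determined by the \<open>M - 1\<close> numbers \<open>level_count d l q\<close>, \<open>0 < l < M\<close>, because tail sums
  decrease. This reduces the residuals of the tail order to finitely many copies of \<open>\<le>\<close> on \<open>\<nat>\<close>.
\<close>

definition level_count :: "nat \<Rightarrow> nat \<Rightarrow> nat poly \<Rightarrow> nat" where
  "level_count d l q = card {j. d \<le> j \<and> l \<le> tail_sum q j}"

lemma tail_sum_le_if_level_count_le:
  assumes "tail_sum q d < M" "\<forall>l\<in>{1..<M}. level_count d l q \<le> level_count d l q'" "d \<le> j"
  shows "tail_sum q j \<le> tail_sum q' j"
proof (rule ccontr)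
  define l where "l = tail_sum q j"
  assume "\<not> tail_sum q j \<le> tail_sum q' j"
  then have lt: "tail_sum q' j < l" and l1: "1 \<le> l" unfolding l_def by auto
  have "l < M" using assms(1,3) tail_sum_antimono[of d j q] unfolding l_def by simp
  have "{j. d \<le> j \<and> l \<le> tail_sum q j} \<subseteq> {d..degree q}"
  proof (intro subsetI)
    fix i assume "i \<in> {j. d \<le> j \<and> l \<le> tail_sum q j}"
    with l1 tail_sum_beyond_degree[of q i] show "i \<in> {d..degree q}" by (cases "i \<le> degree q") auto
  qed
  moreover have "{d..j} \<subseteq> {j. d \<le> j \<and> l \<le> tail_sum q j}"
    unfolding l_def using tail_sum_antimono[of _ j q] by auto
  ultimately have "Suc j - d \<le> level_count d l q"
    unfolding level_count_def by (metis card_atLeastAtMost card_mono finite_atLeastAtMost finite_subset)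
  moreover have "{j. d \<le> j \<and> l \<le> tail_sum q' j} \<subseteq> {d..<j}"
  proof (intro subsetI)
    fix i assume "i \<in> {j. d \<le> j \<and> l \<le> tail_sum q' j}"
    with lt tail_sum_antimono[of j i q'] show "i \<in> {d..<j}" by (cases "j \<le> i") auto
  qed
  then have "level_count d l q' \<le> j - d"
    unfolding level_count_def by (metis card_atLeastLessThan card_mono finite_atLeastLessThan)
  moreover have "level_count d l q \<le> level_count d l q'"
    using assms(2) \<open>l < M\<close> l1 by simp
  ultimately show False using \<open>d \<le> j\<close> by linarith
qed

lemma almost_full_on_tail_le: "almost_full_on UNIV tail_le"
proof (rule almost_full_on_if_residuals)
  fix p :: "nat poly"
  define d where "d = degree p"
  define M where "M = tail_sum p 0"
  define A where "A = {q\<in>UNIV. \<not> tail_le p q}"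
  have small_tail: "tail_sum q d < M" if "q \<in> A" for q
  proof -
    have "\<not> tail_le p q" using that by (simp add: A_def)
    then obtain j where j: "tail_sum q j < tail_sum p j"
      unfolding tail_le_def by (auto simp: not_le)
    then have "j \<le> d"
      using tail_sum_beyond_degree[of p j] unfolding d_def by (metis not_le not_less_zero)
    then show ?thesis
      using j tail_sum_antimono[of j d q] tail_sum_antimono[of 0 j p] unfolding M_def by simp
  qed
  have "almost_full_on A (\<lambda>q q'. (\<forall>c\<in>{..<d}. tail_sum q c \<le> tail_sum q' c)
      \<and> (\<forall>l\<in>{1..<M}. level_count d l q \<le> level_count d l q'))"
    by (intro almost_full_on_conj almost_full_on_Ball almost_full_on_map[OF almost_full_on_nat_le])
      auto
  then show "almost_full_on {q\<in>UNIV. \<not> tail_le p q} tail_le"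
    unfolding A_def[symmetric]
  proof (rule almost_full_on_mono)
    fix q q' assume "q \<in> A" and le: "(\<forall>c\<in>{..<d}. tail_sum q c \<le> tail_sum q' c)
      \<and> (\<forall>l\<in>{1..<M}. level_count d l q \<le> level_count d l q')"
    show "tail_le q q'"
      unfolding tail_le_def
    proof
      fix j show "tail_sum q j \<le> tail_sum q' j"
        using le tail_sum_le_if_level_count_le[OF small_tail[OF \<open>q \<in> A\<close>], of q' j]
        by (cases "j < d") auto
    qed
  qed
qed

lemma almost_full_on_tail_le_fun:
  "almost_full_on UNIV (\<lambda>u w :: 'n::finite \<Rightarrow> nat poly. \<forall>v. tail_le (u v) (w v))"
proof -
  have "almost_full_on UNIV (\<lambda>u w :: 'n \<Rightarrow> nat poly. \<forall>v\<in>UNIV. tail_le (u v) (w v))"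
  proof (rule almost_full_on_Ball)
    show "almost_full_on UNIV (\<lambda>u w. tail_le (u v) (w v))" for v :: 'n
      using almost_full_on_map[OF almost_full_on_tail_le, of UNIV "\<lambda>u. u v"] by simp
  qed simp
  then show ?thesis by simp
qed

section \<open>Monomials in well-mixed \<open>\<sigma>\<close>-ideals\<close>

lemma sym_pow_eq_prod_upto:
  "degree p \<le> N \<Longrightarrow> sym_pow \<sigma> a p = (\<Prod>i\<le>N. ((sigmaR \<sigma> ^^ i) a) ^ coeff p i)"
  unfolding sym_pow_def by (rule prod.mono_neutral_left) (auto simp: coeff_eq_0)

lemma sym_pow_add_monom:
  "sym_pow \<sigma> a (p + monom 1 k) = sym_pow \<sigma> a p * (sigmaR \<sigma> ^^ k) a"
proof -
  define N where "N = max (degree p) k"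
  define f where "f i = (sigmaR \<sigma> ^^ i) a" for i
  have N: "degree (p + monom 1 k) \<le> N"
    by (rule degree_add_le) (auto simp: N_def intro: order.trans[OF degree_monom_le])
  have "sym_pow \<sigma> a (p + monom 1 k) = (\<Prod>i\<le>N. f i ^ coeff p i * (if k = i then f i else 1))"
    unfolding sym_pow_eq_prod_upto[OF N] f_def by (rule prod.cong) (auto simp: coeff_monom)
  also have "\<dots> = (\<Prod>i\<le>N. f i ^ coeff p i) * f k"
    by (simp add: prod.distrib N_def)
  also have "(\<Prod>i\<le>N. f i ^ coeff p i) = sym_pow \<sigma> a p"
    unfolding f_def by (rule sym_pow_eq_prod_upto[symmetric]) (simp add: N_def)
  finally show ?thesis unfolding f_def .
qed

lemma ymon_fun_upd:
  "ymon \<sigma> (u(v := p)) = sym_pow \<sigma> (yvar v) p * (\<Prod>i\<in>UNIV-{v}. sym_pow \<sigma> (yvar i) (u i))"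
  unfolding ymon_def by (subst prod.remove[of UNIV v]) (auto intro!: prod.cong)

lemma ymon_fun_upd_mem:
  assumes I: "wm_sigma_ideal \<sigma> I" and u: "ymon \<sigma> u \<in> I" and le: "tail_le (u v) p"
  shows "ymon \<sigma> (u(v := p)) \<in> I"
proof -
  have ideal: "\<And>a r. a \<in> I \<Longrightarrow> r * a \<in> I"
    and well_mixed: "\<And>a b. a * b \<in> I \<Longrightarrow> a * sigmaR \<sigma> b \<in> I"
    using I unfolding wm_sigma_ideal_def is_ideal_def by blast+
  define rest where "rest = (\<Prod>i\<in>UNIV-{v}. sym_pow \<sigma> (yvar i) (u i))"
  define s where "s k = (sigmaR \<sigma> ^^ k) (yvar v)" for k
  define G where "G p \<longleftrightarrow> sym_pow \<sigma> (yvar v) p * rest \<in> I" for p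
  have add: "sym_pow \<sigma> (yvar v) (p + monom 1 k) * rest = (sym_pow \<sigma> (yvar v) p * rest) * s k"
    for p k unfolding sym_pow_add_monom s_def by (simp only: mult_ac)
  have "shift_closed G"
    unfolding shift_closed_def G_def add
    by (auto simp: s_def intro: ideal[simplified mult.commute] well_mixed[simplified s_def])
  moreover have "G (u v)"
    using u ymon_fun_upd[of \<sigma> u v "u v"] unfolding G_def rest_def by simp
  ultimately have "G p" using le by (blast intro: shift_closed_upward)
  then show ?thesis unfolding G_def rest_def ymon_fun_upd .
qed

lemma ymon_mem_if_tail_le:
  assumes I: "wm_sigma_ideal \<sigma> I" and le: "\<forall>v. tail_le (u v) (w v)" and u: "ymon \<sigma> u \<in> I"
  shows "ymon \<sigma> w \<in> I"
proof -
  have "ymon \<sigma> (\<lambda>v. if v \<in> C then w v else u v) \<in> I" if "finite C" for C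
    using that
  proof (induction C rule: finite_induct)
    case (insert v C)
    have "(\<lambda>i. if i \<in> insert v C then w i else u i)
        = (\<lambda>i. if i \<in> C then w i else u i)(v := w v)"
      by auto
    with insert ymon_fun_upd_mem[OF I insert.IH, of v "w v"] le show ?case by simp
  qed (use u in simp)
  from this[of UNIV] show ?thesis by simp
qed

lemma wm_closure_eqI:
  assumes "F \<subseteq> G" "\<And>I. wm_sigma_ideal \<sigma> I \<Longrightarrow> F \<subseteq> I \<Longrightarrow> G \<subseteq> I"
  shows "wm_closure \<sigma> G = wm_closure \<sigma> F"
  using assms unfolding wm_closure_def by blast

theorem theorem4p10:
  fixes \<sigma> :: "'k::field_char_0 \<Rightarrow> 'k"
    and S :: "('n::finite \<Rightarrow> nat poly) set"
  assumes "ring_endo \<sigma>"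
  shows "\<exists>F. finite F \<and> (\<forall>f\<in>F. is_monomial \<sigma> f)
           \<and> wm_closure \<sigma> (ymon \<sigma> ` S) = wm_closure \<sigma> F"
proof -
  obtain B where B: "finite B" "B \<subseteq> S" and basis: "\<forall>s\<in>S. \<exists>b\<in>B. \<forall>v. tail_le (b v) (s v)"
    using almost_full_on_finite_basis[OF almost_full_on_tail_le_fun, of S] by blast
  have "wm_closure \<sigma> (ymon \<sigma> ` S) = wm_closure \<sigma> (ymon \<sigma> ` B)"
  proof (rule wm_closure_eqI)
    fix I assume "wm_sigma_ideal \<sigma> I" "ymon \<sigma> ` B \<subseteq> I"
    with basis show "ymon \<sigma> ` S \<subseteq> I" by (blast intro: ymon_mem_if_tail_le)
  qed (use B in blast)
  moreover have "\<forall>f\<in>ymon \<sigma> ` B. is_monomial \<sigma> f" unfolding is_monomial_def by blast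
  ultimately show ?thesis using B(1) by blast
qed

end
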